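(* Let $p$ be an odd prime. Then $$L(p^2+1)=L(p^2-1)=\frac{p-1}{2}\cdot\frac{p^2-1}{2}.$$
   Context: For an odd prime $p$ and a positive integer $d$, define $$L(d)=\max_{1\le j\le p-1}\ \sum_{i=j}^{p-1}\left(\left\lfloor \frac{id}{p}\right\rfloor-\left\lfloor \frac{id}{p}-\left(1-\frac1p\right)\frac{jd}{p}\right\rfloor\right).$$ (This is the Booher–Cais lower bound for the $a$-number of a $\mathbb Z/p\mathbb Z$-Galois cover of curves branched at exactly one point with ramification break $d$.) *)

theory Defs
  imports Complex_Main "HOL-Computational_Algebra.Primes"
begin

text \<open>Booher--Cais lower bound L(d) for a prime p (p is an explicit parameter).\<close>
definition BCbound :: "nat \<Rightarrow> nat \<Rightarrow> int" where
  "BCbound p d = Max ((\<lambda>j. \<Sum>i\<in>{j..p-1}.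
       (\<lfloor>real (i*d) / real p\<rfloor>
        - \<lfloor>real (i*d) / real p - (1 - 1 / real p) * (real (j*d) / real p)\<rfloor>)) ` {1..p-1})"

end

theory Submission imports Defs begin

text \<open>Writing \<open>c = (i - j) p + j\<close>, the two floors in the summand are \<open>\<lfloor>i d / p\<rfloor>\<close> and
  \<open>\<lfloor>d c / p\<^sup>2\<rfloor>\<close>, and \<open>c\<close> is a two-digit number in base \<open>p\<close> with
  \<open>0 < c < p\<^sup>2\<close>. For \<open>d = p\<^sup>2 \<plusminus> 1\<close> both quotients are computed exactly, and the summand is
  \<open>j (p - 1)\<close> independently of \<open>i\<close>. The sum over \<open>i\<close> is then \<open>j (p - j) (p - 1)\<close>, which for
  \<open>p = 2k + 1\<close> is maximal at \<open>j = k\<close>.\<close>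

definition bc_summand :: "nat \<Rightarrow> nat \<Rightarrow> nat \<Rightarrow> nat \<Rightarrow> int" where
  "bc_summand p d j i = \<lfloor>real (i*d) / real p\<rfloor>
     - \<lfloor>real (i*d) / real p - (1 - 1 / real p) * (real (j*d) / real p)\<rfloor>"

lemma BCbound_eq_Max_sum:
  "BCbound p d = Max ((\<lambda>j. \<Sum>i\<in>{j..p-1}. bc_summand p d j i) ` {1..p-1})"
  by (simp add: BCbound_def bc_summand_def)

lemma bc_summand_eq_div:
  assumes "p > 0"
  shows "bc_summand p d j i
    = int (i*d) div int p - int d * ((int i - int j) * int p + int j) div int p ^ 2"
proof -
  have arg: "real (i*d) / real p - (1 - 1 / real p) * (real (j*d) / real p)
      = real_of_int (int d * ((int i - int j) * int p + int j)) / real_of_int (int p ^ 2)"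
    using assms by (simp add: field_simps power2_eq_square)
  have "\<lfloor>real (i*d) / real p\<rfloor> = int (i*d) div int p"
    using floor_divide_of_nat_eq[of "i*d" p] by (simp add: zdiv_int)
  moreover have "\<lfloor>real (i*d) / real p - (1 - 1 / real p) * (real (j*d) / real p)\<rfloor>
      = int d * ((int i - int j) * int p + int j) div int p ^ 2"
    unfolding arg by (rule floor_divide_of_int_eq)
  ultimately show ?thesis by (simp only: bc_summand_def)
qed

lemma base_two_digit_bounds:
  assumes "1 \<le> j" "j \<le> i" "i < p"
  shows "0 < (int i - int j) * int p + int j" "(int i - int j) * int p + int j < int p ^ 2"
proof -
  have "(int i - int j) * int p \<le> (int p - 2) * int p"
    using assms by (intro mult_right_mono) auto
  then show "(int i - int j) * int p + int j < int p ^ 2"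
    using assms by (simp add: power2_eq_square algebra_simps)
  have "0 \<le> (int i - int j) * int p"
    using assms by simp
  then show "0 < (int i - int j) * int p + int j"
    using assms by linarith
qed

lemma div_add_one_mult_eq:
  fixes m c :: int
  assumes "0 \<le> c" "c < m"
  shows "((m + 1) * c) div m = c"
proof -
  have "(m + 1) * c = c + c * m" by (simp add: algebra_simps)
  then show ?thesis using assms by simp
qed

lemma div_diff_one_mult_eq:
  fixes m c :: int
  assumes "0 < c" "c \<le> m"
  shows "((m - 1) * c) div m = c - 1"
proof -
  have "(m - 1) * c = (m - c) + (c - 1) * m" by (simp add: algebra_simps)
  then show ?thesis using assms by simp
qed

lemma bc_summand_square_plus_one:
  assumes "1 \<le> j" "j \<le> i" "i < p"
  shows "bc_summand p (p^2 + 1) j i = int j * (int p - 1)"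
proof -
  define c where "c = (int i - int j) * int p + int j"
  have c: "0 < c" "c < int p ^ 2"
    using base_two_digit_bounds[OF assms] by (simp_all add: c_def)
  have "int (i * (p^2 + 1)) div int p = (int i + (int i * int p) * int p) div int p"
    by (simp add: power2_eq_square algebra_simps)
  also have "\<dots> = int i * int p + int i div int p"
    using assms by (intro div_mult_self1) simp
  also have "\<dots> = int i * int p"
    using assms by simp
  finally have "int (i * (p^2 + 1)) div int p = int i * int p" .
  moreover have "int (p^2 + 1) * c div int p ^ 2 = c"
    using div_add_one_mult_eq[of c "int p ^ 2"] c by (simp add: add.commute)
  ultimately show ?thesis
    using assms by (simp add: bc_summand_eq_div c_def[symmetric]) (simp add: c_def algebra_simps)
qed

lemma bc_summand_square_minus_one:
  assumes "1 \<le> j" "j \<le> i" "i < p"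
  shows "bc_summand p (p^2 - 1) j i = int j * (int p - 1)"
proof -
  define c where "c = (int i - int j) * int p + int j"
  have c: "0 < c" "c < int p ^ 2"
    using base_two_digit_bounds[OF assms] by (simp_all add: c_def)
  have sq: "int (p^2 - 1) = int p ^ 2 - 1"
    using assms by (simp add: of_nat_diff)
  have "int (i * (p^2 - 1)) div int p = ((int p - int i) + (int i * int p - 1) * int p) div int p"
    by (simp only: of_nat_mult sq) (simp add: power2_eq_square algebra_simps)
  also have "\<dots> = int i * int p - 1 + (int p - int i) div int p"
    using assms by (intro div_mult_self1) simp
  also have "\<dots> = int i * int p - 1"
    using assms by simp
  finally have "int (i * (p^2 - 1)) div int p = int i * int p - 1" .
  moreover have "int (p^2 - 1) * c div int p ^ 2 = c - 1"
    using div_diff_one_mult_eq[of c "int p ^ 2"] c unfolding sq by simp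
  ultimately show ?thesis
    using assms by (simp add: bc_summand_eq_div c_def[symmetric]) (simp add: c_def algebra_simps)
qed

lemma bc_summand_sum_near_square:
  assumes "d = p^2 + 1 \<or> d = p^2 - 1" "1 \<le> j" "j < p"
  shows "(\<Sum>i\<in>{j..p-1}. bc_summand p d j i) = int j * (int p - int j) * (int p - 1)"
proof -
  have "(\<Sum>i\<in>{j..p-1}. bc_summand p d j i) = (\<Sum>i\<in>{j..p-1}. int j * (int p - 1))"
    using assms bc_summand_square_plus_one bc_summand_square_minus_one
    by (intro sum.cong) auto
  also have "\<dots> = int j * (int p - int j) * (int p - 1)"
    using assms by (simp add: of_nat_diff algebra_simps)
  finally show ?thesis .
qed

lemma mult_diff_le_odd:
  fixes j k :: int
  shows "j * (2*k + 1 - j) \<le> k * (k + 1)"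
proof -
  have "0 \<le> (j - k) * (j - k - 1)"
    by (cases "j \<le> k") (auto intro: mult_nonpos_nonpos)
  then show ?thesis by (simp add: algebra_simps)
qed

lemma Max_mult_diff_odd:
  fixes k :: nat and c :: int
  assumes "1 \<le> k" "0 \<le> c"
  shows "Max ((\<lambda>j. int j * (2 * int k + 1 - int j) * c) ` {1..2*k}) = int k * (int k + 1) * c"
proof (rule Max_eqI)
  show "int k * (int k + 1) * c \<in> (\<lambda>j. int j * (2 * int k + 1 - int j) * c) ` {1..2*k}"
    using assms by (intro image_eqI[where x = k]) auto
next
  fix y assume "y \<in> (\<lambda>j. int j * (2 * int k + 1 - int j) * c) ` {1..2*k}"
  then show "y \<le> int k * (int k + 1) * c"
    using assms mult_diff_le_odd by (auto intro: mult_right_mono)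
qed simp

theorem mainTheorem1:
  fixes p :: nat
  assumes "prime p" and "odd p"
  shows "BCbound p (p^2 + 1) = BCbound p (p^2 - 1)
       \<and> real_of_int (BCbound p (p^2 - 1)) = (real p - 1) / 2 * ((real p ^ 2 - 1) / 2)"
proof -
  obtain k where p: "p = 2*k + 1" using \<open>odd p\<close> oddE by blast
  have k: "1 \<le> k" using prime_ge_2_nat[OF \<open>prime p\<close>] p by simp
  have L: "BCbound p d = int k * (int k + 1) * (2 * int k)" if "d = p^2 + 1 \<or> d = p^2 - 1" for d
  proof -
    have "BCbound p d = Max ((\<lambda>j. int j * (int p - int j) * (int p - 1)) ` {1..p-1})"
      unfolding BCbound_eq_Max_sum using that p
      by (intro arg_cong[where f = Max] image_cong refl bc_summand_sum_near_square) auto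
    also have "\<dots> = int k * (int k + 1) * (2 * int k)"
      using Max_mult_diff_odd[OF k, of "2 * int k"] by (simp add: p ac_simps)
    finally show ?thesis .
  qed
  have "real_of_int (int k * (int k + 1) * (2 * int k)) = (real p - 1) / 2 * ((real p ^ 2 - 1) / 2)"
    by (simp add: p algebra_simps power2_eq_square)
  then show ?thesis using L by simp
qed

end
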